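(* Let $j\in\{2,3,4,5,6\}$, $\mathbf c\in\mathbf C^j_{\rm aut}$, $\mathbf m\in\mathbf M_{\mathbf c}$, $n>0$, $\bar s=(s_1,\dots,s_n)\in\mathbb Z^n$, $\bar b=(b_1,\dots,b_n)\in(L_{\mathbf c})^n$ and $\pi\in\operatorname{End}(N_{\mathbf c})$. Put $F^{\bar s,\bar b}_{\mathbf m}:=\sum_{i=1}^ns_i\,(F^{b_i}_{\mathbf m}\restriction\mathcal Z(H_{\mathbf m}))\in\operatorname{End}(\mathcal Z(H_{\mathbf m}))$ and $h'^*:=h^*_{\mathbf c}\circ\pi:N_{\mathbf c}\to H_{\mathbf c}$. Let $\mathcal A^{\bar s,\bar b}_{\mathbf m,\pi}$ be the set of all $g\in\operatorname{End}(H_{\mathbf m})$ with $g\restriction\mathcal Z(H_{\mathbf m})=F^{\bar s,\bar b}_{\mathbf m}$ and $g(x)\in h'^*(h_{\mathbf m}(x))\cdot\mathcal Z(H_{\mathbf m})$ for all $x\in H_{\mathbf m}$. Let $\mathcal F^{\bar s,\bar b}_{\mathbf m,\pi}$ be the set of all functions $f:N_{\mathbf c}\to\mathcal Z(H_{\mathbf m})$ such that for all $a,b\in N_{\mathbf c}$, $f(a)f(b)=F^{\bar s,\bar b}_{\mathbf m}(t')\cdot(t'')^{-1}\cdot f(ab)$, where $t',t''\in\mathcal Z(H_{\mathbf c})$ are the unique elements with $t'h^*_{\mathbf c}(ab)=h^*_{\mathbf c}(a)h^*_{\mathbf c}(b)$ and $t''h'^*(ab)=h'^*(a)h'^*(b)$.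 For $f\in\mathcal F^{\bar s,\bar b}_{\mathbf m,\pi}$ let $g^{\bar s,\bar b}_{\pi,f}:H_{\mathbf m}\to H_{\mathbf m}$ be $g^{\bar s,\bar b}_{\pi,f}(x)=F^{\bar s,\bar b}_{\mathbf m}(t)\cdot f(h_{\mathbf m}(x))\cdot h'^*(h_{\mathbf m}(x))$, where $t\in\mathcal Z(H_{\mathbf m})$ is the unique element with $x=t\,h^*_{\mathbf c}(h_{\mathbf m}(x))$. Then $\mathcal A^{\bar s,\bar b}_{\mathbf m,\pi}=\{g^{\bar s,\bar b}_{\pi,f}: f\in\mathcal F^{\bar s,\bar b}_{\mathbf m,\pi}\}$.
   Context: Groups are not assumed abelian; $\mathcal Z(H)$ is the center of $H$; the group operation in $\mathcal Z(H)$ is written multiplicatively in the formulas above, while sums of endomorphisms of $\mathcal Z(H)$ are pointwise (so $\sum_is_i\phi_i$ sends $z$ to $\prod_i\phi_i(z)^{s_i}$). $J_p$ is the additive group of $p$-adic integers. $\mathbf C^2_{\rm aut}$: tuples $\mathbf c=(L_{\mathbf c},N_{\mathbf c},H_{\mathbf c},h_{\mathbf c},h^*_{\mathbf c},F_{\mathbf c},(Q^{\bar s}_{\mathbf c}))$ with $L_{\mathbf c},H_{\mathbf c}$ groups, $F_{\mathbf c}:L_{\mathbf c}\to\operatorname{Aut}(H_{\mathbf c})$ an injective homomorphism ($F^\ell_{\mathbf c}:=F_{\mathbf c}(\ell)$), $N_{\mathbf c}\trianglelefteq L_{\mathbf c}$, $h_{\mathbf c}:H_{\mathbf c}\to N_{\mathbf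 c}$ an epimorphism with kernel $\mathcal Z(H_{\mathbf c})$ such that $F_{\mathbf c}(h_{\mathbf c}(a))$ is $x\mapsto axa^{-1}$ for all $a\in H_{\mathbf c}$, $h^*_{\mathbf c}:N_{\mathbf c}\to H_{\mathbf c}$ a map (not necessarily a homomorphism) with $h_{\mathbf c}\circ h^*_{\mathbf c}=\mathrm{id}$, and $(b_1,\dots,b_n)\in Q^{\bar s}_{\mathbf c}$ iff $\sum_is_iF^{b_i}_{\mathbf c}\restriction\mathcal Z(H_{\mathbf c})=0$. $\mathbf C^3_{\rm aut}$: add $H^*_{\mathbf c},\mathbb P_{\mathbf c}$ with $\mathcal Z(H_{\mathbf c})$ reduced; $H^*_{\mathbf c}\le H_{\mathbf c}$, $H_{\mathbf c}=\bigcup_{x\in\mathcal Z(H_{\mathbf c})}H^*_{\mathbf c}x$, $\mathcal Z(H^*_{\mathbf c})=\mathcal Z(H_{\mathbf c})\cap H^*_{\mathbf c}$; $\mathbb P_{\mathbf c}$ = set of primes $p$ such that $\mathcal Z(H_{\mathbf c})$ has a nonzero element of $p$-power order (then so does $\mathcal Z(H^*_{\mathbf c})$) or $J_p$ embeds in $\mathcal Z(H_{\mathbf c})$ (then $J_p$ embeds in $\mathcal Z(H^*_{\mathbf c})$). $\mathbf C^4_{\rm aut}$: $\mathbf c\in\mathbf C^3_{\rm aut}$ with $\mathcal Z(H_{\mathbf c})/\mathcal Z(H^*_{\mathbf c})$ torsion-free and $p$-divisible for all primes $p\notin\mathbb P_{\mathbf c}$. $\mathbf C^5_{\rm aut}$: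 pairs $(\mathbf c,\mathbf g)$, $\mathbf c\in\mathbf C^4_{\rm aut}$, $\mathbf g=(\mathbb G_{\mathbf g},(F^\ell_{\mathbf g})_{\ell\in L_{\mathbf c}})$, $\mathbb G_{\mathbf g}$ reduced torsion-free abelian with no $J_p$ embedded, $F^\ell_{\mathbf g}\in\operatorname{Aut}(\mathbb G_{\mathbf g})$, $(b_i)\in Q^{\bar s}_{\mathbf c}\Rightarrow\sum s_iF^{b_i}_{\mathbf g}=0$. $\mathbf C^6_{\rm aut}$: pairs $(\mathbf c,\mathcal G)$, $\mathbf c\in\mathbf C^4_{\rm aut}$, $\mathcal G$ a nonempty set of $\mathbf g$ with $(\mathbf c,\mathbf g)\in\mathbf C^5_{\rm aut}$, closed under restriction to $\mathrm{cl}\{x\}$ (smallest pure subgroup of $\mathbb G_{\mathbf g}$ containing $x$ closed under all $F^\ell_{\mathbf g}$), and containing up to isomorphism every such one-generated $\mathbf g$ embeddable compatibly into $(\mathcal Z(H_{\mathbf c}),(F^\ell_{\mathbf c})_\ell)$. For $j\in\{5,6\}$ the members are pairs and $L_{\mathbf c},H_{\mathbf c},\dots$ denote components of the underlying tuple. $\mathbf M_{\mathbf c}$: the class of $\mathbf m\in\mathbf C^j_{\rm aut}$ with $L_{\mathbf m}=L_{\mathbf c}$, $N_{\mathbf m}=N_{\mathbf c}$, $H_{\mathbf c}\subseteq H_{\mathbf m}$, $h_{\mathbf c}\subseteq h_{\mathbf m}$, $h^*_{\mathbf m}=h^*_{\mathbf c}$, $F^\ell_{\mathbf c}\subseteq F^\ell_{\mathbf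 m}$ for all $\ell$, $Q^{\bar s}_{\mathbf m}=Q^{\bar s}_{\mathbf c}$, $H_{\mathbf m}$ generated by $\mathcal Z(H_{\mathbf m})\cup H_{\mathbf c}$, $\mathcal Z(H_{\mathbf c})=\mathcal Z(H_{\mathbf m})\cap H_{\mathbf c}$; if $j\ge3$ also $\mathbb P_{\mathbf m}=\mathbb P_{\mathbf c}$, $H^*_{\mathbf m}=H^*_{\mathbf c}$; if $j=5$ the same $\mathbf g$; if $j=6$ the same $\mathcal G$. *)

theory Defs
  imports "HOL-Algebra.Algebra"
begin

definition grp_center :: "('h, 'b) monoid_scheme \<Rightarrow> 'h set" where
  "grp_center H = {z \<in> carrier H. \<forall>x \<in> carrier H. z \<otimes>\<^bsub>H\<^esub> x = x \<otimes>\<^bsub>H\<^esub> z}"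

(* The pointwise combination  sum_i s_i F^{b_i}  evaluated at z, i.e.
   prod_i F^{b_i}(z)^{s_i}  (computed in H; used only on the abelian group Z(H)). *)
definition lin_comb ::
  "('h, 'b) monoid_scheme \<Rightarrow> int list \<Rightarrow> 'l list \<Rightarrow> ('l \<Rightarrow> 'h \<Rightarrow> 'h) \<Rightarrow> 'h \<Rightarrow> 'h" where
  "lin_comb H ss bs F z =
     foldr (\<lambda>(s, b) acc. (F b z [^]\<^bsub>H\<^esub> s) \<otimes>\<^bsub>H\<^esub> acc) (zip ss bs) \<one>\<^bsub>H\<^esub>"

definition Qrel ::
  "('h, 'b) monoid_scheme \<Rightarrow> ('l \<Rightarrow> 'h \<Rightarrow> 'h) \<Rightarrow> int list \<Rightarrow> 'l list \<Rightarrow> bool" where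
  "Qrel H F ss bs \<longleftrightarrow> (\<forall>z \<in> grp_center H. lin_comb H ss bs F z = \<one>\<^bsub>H\<^esub>)"

(* Membership in C^2_aut of the tuple (L, N, H, h, h*, F, (Q^s)); the component Q^s is
   determined by F (Qrel), so it is not a separate parameter. *)
definition C2_aut ::
  "('l, 'a) monoid_scheme \<Rightarrow> 'l set \<Rightarrow> ('h, 'b) monoid_scheme \<Rightarrow> ('h \<Rightarrow> 'l) \<Rightarrow> ('l \<Rightarrow> 'h)
     \<Rightarrow> ('l \<Rightarrow> 'h \<Rightarrow> 'h) \<Rightarrow> bool" where
  "C2_aut L N H h hs F \<longleftrightarrow>
     group L \<and> group H \<and> N \<lhd> L \<and>
     (\<forall>l \<in> carrier L. F l \<in> iso H H) \<and>
     (\<forall>l1 \<in> carrier L. \<forall>l2 \<in> carrier L. \<forall>x \<in> carrier H.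
         F (l1 \<otimes>\<^bsub>L\<^esub> l2) x = F l1 (F l2 x)) \<and>
     (\<forall>l1 \<in> carrier L. \<forall>l2 \<in> carrier L. (\<forall>x \<in> carrier H. F l1 x = F l2 x) \<longrightarrow> l1 = l2) \<and>
     h \<in> epi H (L\<lparr>carrier := N\<rparr>) \<and>
     kernel H (L\<lparr>carrier := N\<rparr>) h = grp_center H \<and>
     (\<forall>a \<in> carrier H. \<forall>x \<in> carrier H. F (h a) x = a \<otimes>\<^bsub>H\<^esub> x \<otimes>\<^bsub>H\<^esub> inv\<^bsub>H\<^esub> a) \<and>
     (\<forall>n \<in> N. hs n \<in> carrier H \<and> h (hs n) = n)"

(* m = (L, N, Hm, hm, hs, Fm, Q_m) belongs to M_c for c = (L, N, Hm|C, hc, hs, Fc, Q_c), j = 2 *)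
definition M_member_2 ::
  "('l, 'a) monoid_scheme \<Rightarrow> 'l set \<Rightarrow> ('h, 'b) monoid_scheme \<Rightarrow> 'h set \<Rightarrow> ('h \<Rightarrow> 'l)
     \<Rightarrow> ('h \<Rightarrow> 'l) \<Rightarrow> ('l \<Rightarrow> 'h) \<Rightarrow> ('l \<Rightarrow> 'h \<Rightarrow> 'h) \<Rightarrow> ('l \<Rightarrow> 'h \<Rightarrow> 'h) \<Rightarrow> bool" where
  "M_member_2 L N Hm C hc hm hs Fc Fm \<longleftrightarrow>
     C2_aut L N Hm hm hs Fm \<and>
     subgroup C Hm \<and>
     (\<forall>x \<in> C. hm x = hc x) \<and>
     (\<forall>l \<in> carrier L. \<forall>x \<in> C. Fm l x = Fc l x) \<and>
     (\<forall>ss bs. length ss = length bs \<longrightarrow> set bs \<subseteq> carrier L \<longrightarrow>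
         (Qrel Hm Fm ss bs \<longleftrightarrow> Qrel (Hm\<lparr>carrier := C\<rparr>) Fc ss bs)) \<and>
     carrier Hm = generate Hm (grp_center Hm \<union> C) \<and>
     grp_center (Hm\<lparr>carrier := C\<rparr>) = grp_center Hm \<inter> C"

definition A_set ::
  "('l, 'a) monoid_scheme \<Rightarrow> ('h, 'b) monoid_scheme \<Rightarrow> ('h \<Rightarrow> 'l) \<Rightarrow> ('l \<Rightarrow> 'h)
     \<Rightarrow> ('l \<Rightarrow> 'h \<Rightarrow> 'h) \<Rightarrow> int list \<Rightarrow> 'l list \<Rightarrow> ('l \<Rightarrow> 'l) \<Rightarrow> ('h \<Rightarrow> 'h) set" where
  "A_set L Hm hm hs Fm ss bs \<pi> =
     {g \<in> hom Hm Hm. g \<in> extensional (carrier Hm) \<and>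
        (\<forall>z \<in> grp_center Hm. g z = lin_comb Hm ss bs Fm z) \<and>
        (\<forall>x \<in> carrier Hm. g x \<in> hs (\<pi> (hm x)) <#\<^bsub>Hm\<^esub> grp_center Hm)}"

definition F_set ::
  "('l, 'a) monoid_scheme \<Rightarrow> 'l set \<Rightarrow> ('h, 'b) monoid_scheme \<Rightarrow> 'h set \<Rightarrow> ('l \<Rightarrow> 'h)
     \<Rightarrow> ('l \<Rightarrow> 'h \<Rightarrow> 'h) \<Rightarrow> int list \<Rightarrow> 'l list \<Rightarrow> ('l \<Rightarrow> 'l) \<Rightarrow> ('l \<Rightarrow> 'h) set" where
  "F_set L N Hm C hs Fm ss bs \<pi> =
     {f \<in> N \<rightarrow>\<^sub>E grp_center Hm.
        \<forall>a \<in> N. \<forall>b \<in> N.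
          f a \<otimes>\<^bsub>Hm\<^esub> f b =
            lin_comb Hm ss bs Fm
               (THE t'. t' \<in> grp_center (Hm\<lparr>carrier := C\<rparr>) \<and>
                   t' \<otimes>\<^bsub>Hm\<^esub> hs (a \<otimes>\<^bsub>L\<^esub> b) = hs a \<otimes>\<^bsub>Hm\<^esub> hs b)
            \<otimes>\<^bsub>Hm\<^esub> inv\<^bsub>Hm\<^esub>
               (THE t''. t'' \<in> grp_center (Hm\<lparr>carrier := C\<rparr>) \<and>
                   t'' \<otimes>\<^bsub>Hm\<^esub> hs (\<pi> (a \<otimes>\<^bsub>L\<^esub> b)) = hs (\<pi> a) \<otimes>\<^bsub>Hm\<^esub> hs (\<pi> b))
            \<otimes>\<^bsub>Hm\<^esub> f (a \<otimes>\<^bsub>L\<^esub> b)}"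

definition g_fun ::
  "('h, 'b) monoid_scheme \<Rightarrow> ('h \<Rightarrow> 'l) \<Rightarrow> ('l \<Rightarrow> 'h) \<Rightarrow> ('l \<Rightarrow> 'h \<Rightarrow> 'h) \<Rightarrow> int list
     \<Rightarrow> 'l list \<Rightarrow> ('l \<Rightarrow> 'l) \<Rightarrow> ('l \<Rightarrow> 'h) \<Rightarrow> 'h \<Rightarrow> 'h" where
  "g_fun Hm hm hs Fm ss bs \<pi> f =
     (\<lambda>x \<in> carrier Hm.
        lin_comb Hm ss bs Fm (THE t. t \<in> grp_center Hm \<and> x = t \<otimes>\<^bsub>Hm\<^esub> hs (hm x))
        \<otimes>\<^bsub>Hm\<^esub> f (hm x) \<otimes>\<^bsub>Hm\<^esub> hs (\<pi> (hm x)))"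

end

theory Submission
  imports Defs
begin

(*
  The kernel of h is the centre Z(H), so every x in H is uniquely t * sigma (h x) with t central,
  and the section sigma is multiplicative only up to the central cocycle
  c(a, b) = sigma a * sigma b * sigma (a b)^-1.  An endomorphism g of H that acts as Phi on Z(H)
  is therefore determined by phi = g o sigma via g (t * sigma a) = Phi t * phi a, and this formula
  defines an endomorphism exactly when phi a * phi b = Phi (c(a, b)) * phi (a b).  The covering
  condition g x in sigma (pi (h x)) Z(H) says phi a = f a * sigma (pi a) with f central, and
  rewriting the condition on phi in terms of f gives the defining equation of the set F.
*)

lemma (in group) grp_center_commute:
  "z \<in> grp_center G \<Longrightarrow> x \<in> carrier G \<Longrightarrow> z \<otimes> x = x \<otimes> z"
  by (simp add: grp_center_def)

lemma (in group) grp_center_closed: "z \<in> grp_center G \<Longrightarrow> z \<in> carrier G"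
  by (simp add: grp_center_def)

lemma (in group) grp_center_mult_swap:
  assumes "z \<in> grp_center G" "w \<in> grp_center G" "p \<in> carrier G" "q \<in> carrier G"
  shows "(z \<otimes> p) \<otimes> (w \<otimes> q) = (z \<otimes> w) \<otimes> (p \<otimes> q)"
proof -
  have "(z \<otimes> p) \<otimes> (w \<otimes> q) = z \<otimes> ((p \<otimes> w) \<otimes> q)"
    using assms grp_center_closed by (simp add: m_assoc)
  also have "\<dots> = z \<otimes> ((w \<otimes> p) \<otimes> q)"
    using grp_center_commute[OF assms(2,3)] by simp
  finally show ?thesis
    using assms grp_center_closed by (simp add: m_assoc)
qed

lemma (in group) mem_l_coset_grp_center_iff:
  assumes p: "p \<in> carrier G"
  shows "y \<in> p <# grp_center G \<longleftrightarrow> y \<in> carrier G \<and> y \<otimes> inv p \<in> grp_center G"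
proof
  assume "y \<in> p <# grp_center G"
  then obtain z where z: "z \<in> grp_center G" and y: "y = p \<otimes> z"
    by (auto simp: l_coset_def)
  have "y = z \<otimes> p"
    using y grp_center_commute[OF z p] by simp
  then have "y \<otimes> inv p = z"
    using p z grp_center_closed by (simp add: m_assoc)
  then show "y \<in> carrier G \<and> y \<otimes> inv p \<in> grp_center G"
    using y p z grp_center_closed by simp
next
  assume y: "y \<in> carrier G \<and> y \<otimes> inv p \<in> grp_center G"
  have "y = p \<otimes> (y \<otimes> inv p)"
    using y p grp_center_commute[of "y \<otimes> inv p" p] by (simp add: m_assoc)
  then show "y \<in> p <# grp_center G"
    using y unfolding l_coset_def by blast
qed

lemma (in group) grp_center_subgroup: "subgroup (grp_center G) G"
proof (rule subgroupI)
  show "grp_center G \<subseteq> carrier G"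
    using grp_center_closed by blast
  have "\<one> \<in> grp_center G"
    by (simp add: grp_center_def)
  then show "grp_center G \<noteq> {}"
    by blast
next
  fix z assume z: "z \<in> grp_center G"
  then have zc: "z \<in> carrier G"
    by (rule grp_center_closed)
  have comm: "inv z \<otimes> x = x \<otimes> inv z" if x: "x \<in> carrier G" for x
  proof -
    have "inv z \<otimes> x = inv z \<otimes> (x \<otimes> z) \<otimes> inv z"
      using x zc by (simp add: m_assoc)
    also have "\<dots> = inv z \<otimes> (z \<otimes> x) \<otimes> inv z"
      using grp_center_commute[OF z x] by simp
    also have "\<dots> = x \<otimes> inv z"
      using x zc by (simp flip: m_assoc)
    finally show ?thesis .
  qed
  show "inv z \<in> grp_center G"
    unfolding grp_center_def using zc comm by simp
next
  fix z w assume z: "z \<in> grp_center G" and w: "w \<in> grp_center G"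
  then have zc: "z \<in> carrier G" and wc: "w \<in> carrier G"
    by (simp_all add: grp_center_closed)
  have comm: "z \<otimes> w \<otimes> x = x \<otimes> (z \<otimes> w)" if x: "x \<in> carrier G" for x
  proof -
    have "z \<otimes> w \<otimes> x = z \<otimes> (x \<otimes> w)"
      using x zc wc grp_center_commute[OF w x] by (simp add: m_assoc)
    also have "\<dots> = x \<otimes> (z \<otimes> w)"
      using x zc wc grp_center_commute[OF z x] by (simp flip: m_assoc)
    finally show ?thesis .
  qed
  show "z \<otimes> w \<in> grp_center G"
    unfolding grp_center_def using zc wc comm by simp
qed

lemma (in group) comm_group_grp_center: "comm_group (G\<lparr>carrier := grp_center G\<rparr>)"
proof (rule group.group_comm_groupI[OF subgroup_imp_group[OF grp_center_subgroup]])
  fix x y assume x: "x \<in> carrier (G\<lparr>carrier := grp_center G\<rparr>)"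
    and y: "y \<in> carrier (G\<lparr>carrier := grp_center G\<rparr>)"
  have "y \<in> carrier G"
    using y by (simp add: grp_center_def)
  then show "x \<otimes>\<^bsub>G\<lparr>carrier := grp_center G\<rparr>\<^esub> y = y \<otimes>\<^bsub>G\<lparr>carrier := grp_center G\<rparr>\<^esub> x"
    using x grp_center_commute[of x y] by simp
qed

lemma surj_hom_grp_center_closed:
  assumes \<phi>: "\<phi> \<in> hom G H" and onto: "\<phi> ` carrier G = carrier H"
    and z: "z \<in> grp_center G"
  shows "\<phi> z \<in> grp_center H"
proof -
  have zc: "z \<in> carrier G"
    using z by (simp add: grp_center_def)
  have "\<phi> z \<otimes>\<^bsub>H\<^esub> y = y \<otimes>\<^bsub>H\<^esub> \<phi> z" if "y \<in> carrier H" for y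
  proof -
    obtain x where x: "x \<in> carrier G" and y: "y = \<phi> x"
      using \<open>y \<in> carrier H\<close> onto by blast
    have "\<phi> z \<otimes>\<^bsub>H\<^esub> \<phi> x = \<phi> (z \<otimes>\<^bsub>G\<^esub> x)"
      using \<phi> zc x by (simp add: hom_mult)
    also have "\<dots> = \<phi> (x \<otimes>\<^bsub>G\<^esub> z)"
      using z x by (simp add: grp_center_def)
    also have "\<dots> = \<phi> x \<otimes>\<^bsub>H\<^esub> \<phi> z"
      using \<phi> zc x by (simp add: hom_mult)
    finally show ?thesis
      using y by simp
  qed
  moreover have "\<phi> z \<in> carrier H"
    using \<phi> zc by (rule hom_in_carrier)
  ultimately show ?thesis
    by (simp add: grp_center_def)
qed

lemma (in group) the_factor_eq:
  assumes "S \<subseteq> carrier G" "u \<in> carrier G" "v \<in> carrier G" "u \<otimes> inv v \<in> S"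
  shows "(THE t. t \<in> S \<and> t \<otimes> v = u) = u \<otimes> inv v"
proof (rule the_equality)
  show "u \<otimes> inv v \<in> S \<and> u \<otimes> inv v \<otimes> v = u"
    using assms by (simp add: m_assoc)
next
  fix t assume "t \<in> S \<and> t \<otimes> v = u"
  then show "t = u \<otimes> inv v"
    using assms inv_solve_right[of t u v] by blast
qed

lemma lin_comb_Nil [simp]:
  "lin_comb G [] bs F z = \<one>\<^bsub>G\<^esub>" "lin_comb G ss [] F z = \<one>\<^bsub>G\<^esub>"
  by (simp_all add: lin_comb_def)

lemma lin_comb_Cons [simp]:
  "lin_comb G (s # ss) (b # bs) F z = F b z [^]\<^bsub>G\<^esub> s \<otimes>\<^bsub>G\<^esub> lin_comb G ss bs F z"
  by (simp add: lin_comb_def)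

lemma (in group) one_hom_grp_center:
  "(\<lambda>z. \<one>) \<in> hom (G\<lparr>carrier := grp_center G\<rparr>) (G\<lparr>carrier := grp_center G\<rparr>)"
  using subgroup.one_closed[OF grp_center_subgroup] by (simp add: hom_def)

lemma (in group) iso_int_pow_hom_grp_center:
  assumes F: "F \<in> iso G G"
  shows "(\<lambda>z. F z [^] (s::int)) \<in> hom (G\<lparr>carrier := grp_center G\<rparr>) (G\<lparr>carrier := grp_center G\<rparr>)"
proof (rule homI)
  have F_hom: "F \<in> hom G G" and onto: "F ` carrier G = carrier G"
    using F by (auto simp: iso_def bij_betw_def)
  have FZ: "F z \<in> grp_center G" if "z \<in> grp_center G" for z
    using surj_hom_grp_center_closed[OF F_hom onto that] .
  fix z w
  assume z: "z \<in> carrier (G\<lparr>carrier := grp_center G\<rparr>)"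
    and w: "w \<in> carrier (G\<lparr>carrier := grp_center G\<rparr>)"
  then show "F z [^] s \<in> carrier (G\<lparr>carrier := grp_center G\<rparr>)"
    using FZ subgroup_int_pow_closed[OF grp_center_subgroup] by simp
  have "F (z \<otimes> w) [^] s = (F z \<otimes> F w) [^] s"
    using F_hom z w grp_center_closed by (simp add: hom_mult)
  also have "\<dots> = F z [^] s \<otimes> F w [^] s"
  proof (rule int_pow_mult_distrib)
    show "F z \<in> carrier G" "F w \<in> carrier G"
      using z w FZ grp_center_closed by simp_all
    then show "F z \<otimes> F w = F w \<otimes> F z"
      using z FZ grp_center_commute by simp
  qed
  finally show "F (z \<otimes>\<^bsub>G\<lparr>carrier := grp_center G\<rparr>\<^esub> w) [^] s =
      F z [^] s \<otimes>\<^bsub>G\<lparr>carrier := grp_center G\<rparr>\<^esub> F w [^] s"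
    by simp
qed

lemma (in group) lin_comb_hom_grp_center:
  assumes "\<forall>b \<in> set bs. F b \<in> iso G G"
  shows "lin_comb G ss bs F \<in> hom (G\<lparr>carrier := grp_center G\<rparr>) (G\<lparr>carrier := grp_center G\<rparr>)"
  using assms
proof (induction ss arbitrary: bs)
  case Nil
  then show ?case
    using one_hom_grp_center by simp
next
  case (Cons s ss)
  interpret Z: comm_group "G\<lparr>carrier := grp_center G\<rparr>"
    by (rule comm_group_grp_center)
  show ?case
  proof (cases bs)
    case Nil
    then show ?thesis
      using one_hom_grp_center by simp
  next
    case (Cons b bs')
    then have "(\<lambda>z. F b z [^] s \<otimes>\<^bsub>G\<lparr>carrier := grp_center G\<rparr>\<^esub> lin_comb G ss bs' F z)
        \<in> hom (G\<lparr>carrier := grp_center G\<rparr>) (G\<lparr>carrier := grp_center G\<rparr>)"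
      using Cons.prems Cons.IH by (intro Z.hom_group_mult iso_int_pow_hom_grp_center) auto
    then show ?thesis
      using Cons by simp
  qed
qed

(*
  K plays the role of N = H/Z(H) and sigma that of the set-theoretic section h*, whose values
  lie in the subgroup C (the group H_c of the statement).
*)
locale central_quotient_section = group H + K: group K
  for H :: "('a, 'm) monoid_scheme" (structure) and K :: "('k, 'n) monoid_scheme"
    and h :: "'a \<Rightarrow> 'k" and \<sigma> :: "'k \<Rightarrow> 'a" and C :: "'a set" +
  assumes h_hom: "h \<in> hom H K"
    and kernel_eq_grp_center: "kernel H K h = grp_center H"
    and subgroup_C: "subgroup C H"
    and grp_center_C: "grp_center (H\<lparr>carrier := C\<rparr>) = grp_center H \<inter> C"
    and section_in_C: "a \<in> carrier K \<Longrightarrow> \<sigma> a \<in> C"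
    and h_section: "a \<in> carrier K \<Longrightarrow> h (\<sigma> a) = a"
begin

lemma h_closed: "x \<in> carrier H \<Longrightarrow> h x \<in> carrier K"
  using h_hom by (rule hom_in_carrier)

lemma h_mult: "x \<in> carrier H \<Longrightarrow> y \<in> carrier H \<Longrightarrow> h (x \<otimes> y) = h x \<otimes>\<^bsub>K\<^esub> h y"
  using h_hom by (rule hom_mult)

lemma section_closed: "a \<in> carrier K \<Longrightarrow> \<sigma> a \<in> carrier H"
  using section_in_C subgroup.mem_carrier[OF subgroup_C] by blast

lemma mem_grp_center_iff: "x \<in> carrier H \<Longrightarrow> x \<in> grp_center H \<longleftrightarrow> h x = \<one>\<^bsub>K\<^esub>"
  using kernel_eq_grp_center by (auto simp: kernel_def)

lemma h_eq_imp_grp_center: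
  assumes "x \<in> carrier H" "y \<in> carrier H" "h x = h y"
  shows "x \<otimes> inv y \<in> grp_center H"
proof -
  interpret group_hom H K h
    using h_hom by unfold_locales
  have "h (x \<otimes> inv y) = \<one>\<^bsub>K\<^esub>"
    using assms h_closed by simp
  then show ?thesis
    using assms mem_grp_center_iff by simp
qed

definition center_part :: "'a \<Rightarrow> 'a" where
  "center_part x = x \<otimes> inv \<sigma> (h x)"

definition section_cocycle :: "'k \<Rightarrow> 'k \<Rightarrow> 'a" where
  "section_cocycle a b = \<sigma> a \<otimes> \<sigma> b \<otimes> inv \<sigma> (a \<otimes>\<^bsub>K\<^esub> b)"

lemma center_part_grp_center: "x \<in> carrier H \<Longrightarrow> center_part x \<in> grp_center H"
  unfolding center_part_def
  by (rule h_eq_imp_grp_center) (simp_all add: h_closed section_closed h_section)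

lemma center_part_decomp: "x \<in> carrier H \<Longrightarrow> center_part x \<otimes> \<sigma> (h x) = x"
  by (simp add: center_part_def m_assoc h_closed section_closed)

lemma center_part_unique:
  assumes "x \<in> carrier H" "t \<in> carrier H" "x = t \<otimes> \<sigma> (h x)"
  shows "center_part x = t"
  using assms by (simp add: center_part_def inv_solve_right' h_closed section_closed)

lemma the_center_part:
  assumes "x \<in> carrier H"
  shows "(THE t. t \<in> grp_center H \<and> x = t \<otimes> \<sigma> (h x)) = center_part x"
proof -
  have "(THE t. t \<in> grp_center H \<and> t \<otimes> \<sigma> (h x) = x) = center_part x"
    unfolding center_part_def
    using assms center_part_grp_center[OF assms] grp_center_closed h_closed section_closed
    by (intro the_factor_eq) (auto simp: center_part_def)
  then show ?thesis
    by (simp add: eq_commute[of x])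
qed

lemma section_cocycle_grp_center:
  assumes "a \<in> carrier K" "b \<in> carrier K"
  shows "section_cocycle a b \<in> grp_center H"
  unfolding section_cocycle_def
  using assms by (intro h_eq_imp_grp_center) (simp_all add: h_mult h_section section_closed)

lemma section_cocycle_decomp:
  assumes "a \<in> carrier K" "b \<in> carrier K"
  shows "section_cocycle a b \<otimes> \<sigma> (a \<otimes>\<^bsub>K\<^esub> b) = \<sigma> a \<otimes> \<sigma> b"
  using assms by (simp add: section_cocycle_def m_assoc section_closed)

lemma the_section_cocycle:
  assumes "a \<in> carrier K" "b \<in> carrier K"
  shows "(THE t. t \<in> grp_center (H\<lparr>carrier := C\<rparr>) \<and> t \<otimes> \<sigma> (a \<otimes>\<^bsub>K\<^esub> b) = \<sigma> a \<otimes> \<sigma> b)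
    = section_cocycle a b"
proof -
  have "section_cocycle a b \<in> C"
    unfolding section_cocycle_def using assms subgroup_C section_in_C
    by (simp add: subgroup.m_closed subgroup.m_inv_closed)
  then show ?thesis
    unfolding section_cocycle_def
    using assms section_cocycle_grp_center grp_center_C
    by (intro the_factor_eq) (auto simp: section_cocycle_def section_closed grp_center_def)
qed

lemma center_part_mult:
  assumes x: "x \<in> carrier H" and y: "y \<in> carrier H"
  shows "center_part (x \<otimes> y) = center_part x \<otimes> center_part y \<otimes> section_cocycle (h x) (h y)"
proof (rule center_part_unique)
  have Z: "center_part x \<in> grp_center H" "center_part y \<in> grp_center H"
    "section_cocycle (h x) (h y) \<in> grp_center H"
    using x y center_part_grp_center section_cocycle_grp_center h_closed by simp_all
  then show "center_part x \<otimes> center_part y \<otimes> section_cocycle (h x) (h y) \<in> carrier H"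
    using grp_center_closed by simp
  have "x \<otimes> y = (center_part x \<otimes> \<sigma> (h x)) \<otimes> (center_part y \<otimes> \<sigma> (h y))"
    using x y center_part_decomp by simp
  also have "\<dots> = (center_part x \<otimes> center_part y) \<otimes> (\<sigma> (h x) \<otimes> \<sigma> (h y))"
    using Z x y by (intro grp_center_mult_swap) (simp_all add: h_closed section_closed)
  also have "\<dots> = (center_part x \<otimes> center_part y) \<otimes> (section_cocycle (h x) (h y) \<otimes> \<sigma> (h (x \<otimes> y)))"
    using x y h_closed section_cocycle_decomp by (simp add: h_mult)
  finally show "x \<otimes> y = center_part x \<otimes> center_part y \<otimes> section_cocycle (h x) (h y) \<otimes> \<sigma> (h (x \<otimes> y))"
    using Z x y grp_center_closed h_closed section_closed by (simp add: m_assoc)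
qed (use x y in simp)

lemma section_cocycle_one: "section_cocycle \<one>\<^bsub>K\<^esub> \<one>\<^bsub>K\<^esub> = \<sigma> \<one>\<^bsub>K\<^esub>"
  by (simp add: section_cocycle_def m_assoc section_closed)

lemma twisted_section_mult_iff:
  assumes Z: "u \<in> grp_center H" "v \<in> grp_center H" "w \<in> grp_center H" "t \<in> grp_center H"
    and ab: "a \<in> carrier K" "b \<in> carrier K"
  shows "(u \<otimes> \<sigma> a) \<otimes> (v \<otimes> \<sigma> b) = w \<otimes> (t \<otimes> \<sigma> (a \<otimes>\<^bsub>K\<^esub> b))
    \<longleftrightarrow> u \<otimes> v = w \<otimes> inv (section_cocycle a b) \<otimes> t"
proof -
  let ?c = "section_cocycle a b"
  have c: "?c \<in> grp_center H"
    using ab by (rule section_cocycle_grp_center)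
  have carr: "u \<in> carrier H" "v \<in> carrier H" "w \<in> carrier H" "t \<in> carrier H" "?c \<in> carrier H"
    "\<sigma> a \<in> carrier H" "\<sigma> b \<in> carrier H" "\<sigma> (a \<otimes>\<^bsub>K\<^esub> b) \<in> carrier H"
    using Z c grp_center_closed ab section_closed by simp_all
  have "(u \<otimes> \<sigma> a) \<otimes> (v \<otimes> \<sigma> b) = (u \<otimes> v) \<otimes> (\<sigma> a \<otimes> \<sigma> b)"
    using Z ab by (intro grp_center_mult_swap) (simp_all add: section_closed)
  also have "\<dots> = (u \<otimes> v \<otimes> ?c) \<otimes> \<sigma> (a \<otimes>\<^bsub>K\<^esub> b)"
    using ab carr section_cocycle_decomp by (simp add: m_assoc)
  finally have lhs: "(u \<otimes> \<sigma> a) \<otimes> (v \<otimes> \<sigma> b) = (u \<otimes> v \<otimes> ?c) \<otimes> \<sigma> (a \<otimes>\<^bsub>K\<^esub> b)" .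
  have "w \<otimes> inv ?c \<otimes> t = w \<otimes> t \<otimes> inv ?c"
    using carr grp_center_commute[OF Z(4), of "inv ?c"] by (simp add: m_assoc)
  then have "u \<otimes> v = w \<otimes> inv ?c \<otimes> t \<longleftrightarrow> u \<otimes> v \<otimes> ?c = w \<otimes> t"
    using carr by (simp add: inv_solve_right)
  then show ?thesis
    using lhs carr by (simp add: m_assoc[symmetric])
qed

definition central_lift :: "('a \<Rightarrow> 'a) \<Rightarrow> ('k \<Rightarrow> 'a) \<Rightarrow> 'a \<Rightarrow> 'a" where
  "central_lift \<Phi> \<phi> = (\<lambda>x \<in> carrier H. \<Phi> (center_part x) \<otimes> \<phi> (h x))"

lemma central_lift_cong:
  "(\<And>a. a \<in> carrier K \<Longrightarrow> \<phi> a = \<psi> a) \<Longrightarrow> central_lift \<Phi> \<phi> = central_lift \<Phi> \<psi>"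
  unfolding central_lift_def by (intro restrict_ext) (simp add: h_closed)

(* For Phi = F^{s,b}_m these are the sets A and F of the statement. *)
definition covering_endos :: "('a \<Rightarrow> 'a) \<Rightarrow> ('k \<Rightarrow> 'k) \<Rightarrow> ('a \<Rightarrow> 'a) set" where
  "covering_endos \<Phi> \<pi> =
     {g \<in> hom H H. g \<in> extensional (carrier H) \<and> (\<forall>z \<in> grp_center H. g z = \<Phi> z) \<and>
        (\<forall>x \<in> carrier H. g x \<in> \<sigma> (\<pi> (h x)) <# grp_center H)}"

definition twisting_functions :: "('a \<Rightarrow> 'a) \<Rightarrow> ('k \<Rightarrow> 'k) \<Rightarrow> ('k \<Rightarrow> 'a) set" where
  "twisting_functions \<Phi> \<pi> =
     {f \<in> carrier K \<rightarrow>\<^sub>E grp_center H. \<forall>a \<in> carrier K. \<forall>b \<in> carrier K.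
        f a \<otimes> f b = \<Phi> (section_cocycle a b) \<otimes> inv (section_cocycle (\<pi> a) (\<pi> b)) \<otimes> f (a \<otimes>\<^bsub>K\<^esub> b)}"

context
  fixes \<Phi> :: "'a \<Rightarrow> 'a"
  assumes \<Phi>_hom: "\<Phi> \<in> hom (H\<lparr>carrier := grp_center H\<rparr>) (H\<lparr>carrier := grp_center H\<rparr>)"
begin

lemma \<Phi>_grp_center: "z \<in> grp_center H \<Longrightarrow> \<Phi> z \<in> grp_center H"
  using hom_in_carrier[OF \<Phi>_hom] by simp

lemma \<Phi>_mult: "z \<in> grp_center H \<Longrightarrow> w \<in> grp_center H \<Longrightarrow> \<Phi> (z \<otimes> w) = \<Phi> z \<otimes> \<Phi> w"
  using hom_mult[OF \<Phi>_hom] by simp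

lemma central_lift_hom:
  assumes \<phi>: "\<And>a. a \<in> carrier K \<Longrightarrow> \<phi> a \<in> carrier H"
    and cocycle: "\<And>a b. a \<in> carrier K \<Longrightarrow> b \<in> carrier K \<Longrightarrow>
      \<phi> a \<otimes> \<phi> b = \<Phi> (section_cocycle a b) \<otimes> \<phi> (a \<otimes>\<^bsub>K\<^esub> b)"
  shows "central_lift \<Phi> \<phi> \<in> hom H H"
proof (rule homI)
  fix x assume "x \<in> carrier H"
  then show "central_lift \<Phi> \<phi> x \<in> carrier H"
    by (simp add: central_lift_def \<Phi>_grp_center center_part_grp_center grp_center_closed \<phi> h_closed)
next
  fix x y assume x: "x \<in> carrier H" and y: "y \<in> carrier H"
  let ?c = "section_cocycle (h x) (h y)"
  have Z: "center_part x \<in> grp_center H" "center_part y \<in> grp_center H" "?c \<in> grp_center H"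
    using x y center_part_grp_center section_cocycle_grp_center h_closed by simp_all
  have \<Phi>Z: "\<Phi> (center_part x) \<in> grp_center H" "\<Phi> (center_part y) \<in> grp_center H"
    "\<Phi> ?c \<in> grp_center H"
    using Z \<Phi>_grp_center by simp_all
  have carr: "\<phi> (h x) \<in> carrier H" "\<phi> (h y) \<in> carrier H" "\<phi> (h x \<otimes>\<^bsub>K\<^esub> h y) \<in> carrier H"
    using x y \<phi> h_closed by simp_all
  have "central_lift \<Phi> \<phi> (x \<otimes> y) = \<Phi> (center_part x \<otimes> center_part y \<otimes> ?c) \<otimes> \<phi> (h x \<otimes>\<^bsub>K\<^esub> h y)"
    using x y by (simp add: central_lift_def center_part_mult h_mult)
  also have "\<dots> = (\<Phi> (center_part x) \<otimes> \<Phi> (center_part y)) \<otimes> (\<Phi> ?c \<otimes> \<phi> (h x \<otimes>\<^bsub>K\<^esub> h y))"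
  proof -
    have "\<Phi> (center_part x \<otimes> center_part y \<otimes> ?c) = \<Phi> (center_part x) \<otimes> \<Phi> (center_part y) \<otimes> \<Phi> ?c"
      using Z by (simp add: \<Phi>_mult subgroup.m_closed[OF grp_center_subgroup])
    then show ?thesis
      using \<Phi>Z carr by (simp add: grp_center_closed m_assoc)
  qed
  also have "\<dots> = (\<Phi> (center_part x) \<otimes> \<Phi> (center_part y)) \<otimes> (\<phi> (h x) \<otimes> \<phi> (h y))"
    using x y h_closed cocycle by simp
  also have "\<dots> = (\<Phi> (center_part x) \<otimes> \<phi> (h x)) \<otimes> (\<Phi> (center_part y) \<otimes> \<phi> (h y))"
    using \<Phi>Z carr by (intro grp_center_mult_swap[symmetric])
  also have "\<dots> = central_lift \<Phi> \<phi> x \<otimes> central_lift \<Phi> \<phi> y"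
    using x y by (simp add: central_lift_def)
  finally show "central_lift \<Phi> \<phi> (x \<otimes> y) = central_lift \<Phi> \<phi> x \<otimes> central_lift \<Phi> \<phi> y" .
qed

lemma central_lift_grp_center:
  assumes \<phi>: "\<And>a. a \<in> carrier K \<Longrightarrow> \<phi> a \<in> carrier H"
    and cocycle: "\<And>a b. a \<in> carrier K \<Longrightarrow> b \<in> carrier K \<Longrightarrow>
      \<phi> a \<otimes> \<phi> b = \<Phi> (section_cocycle a b) \<otimes> \<phi> (a \<otimes>\<^bsub>K\<^esub> b)"
    and z: "z \<in> grp_center H"
  shows "central_lift \<Phi> \<phi> z = \<Phi> z"
proof -
  have zc: "z \<in> carrier H"
    using z by (rule grp_center_closed)
  then have hz: "h z = \<one>\<^bsub>K\<^esub>"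
    using z mem_grp_center_iff by simp
  have \<sigma>1: "\<sigma> \<one>\<^bsub>K\<^esub> \<in> grp_center H"
    using section_cocycle_grp_center[OF K.one_closed K.one_closed] by (simp add: section_cocycle_one)
  have "\<phi> \<one>\<^bsub>K\<^esub> \<otimes> \<phi> \<one>\<^bsub>K\<^esub> = \<Phi> (\<sigma> \<one>\<^bsub>K\<^esub>) \<otimes> \<phi> \<one>\<^bsub>K\<^esub>"
    using cocycle[OF K.one_closed K.one_closed] by (simp add: section_cocycle_one)
  then have \<phi>1: "\<phi> \<one>\<^bsub>K\<^esub> = \<Phi> (\<sigma> \<one>\<^bsub>K\<^esub>)"
    using \<phi> \<sigma>1 \<Phi>_grp_center grp_center_closed by simp
  have "central_lift \<Phi> \<phi> z = \<Phi> (center_part z) \<otimes> \<Phi> (\<sigma> (h z))"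
    using zc hz \<phi>1 by (simp add: central_lift_def)
  also have "\<dots> = \<Phi> (center_part z \<otimes> \<sigma> (h z))"
    using zc hz \<sigma>1 center_part_grp_center by (simp add: \<Phi>_mult)
  also have "\<dots> = \<Phi> z"
    using zc by (simp add: center_part_decomp)
  finally show ?thesis .
qed

lemma hom_eq_central_lift:
  assumes g: "g \<in> hom H H" "g \<in> extensional (carrier H)"
    and gZ: "\<And>z. z \<in> grp_center H \<Longrightarrow> g z = \<Phi> z"
  shows "g = central_lift \<Phi> (\<lambda>a. g (\<sigma> a))"
proof (rule extensionalityI[OF g(2)])
  show "central_lift \<Phi> (\<lambda>a. g (\<sigma> a)) \<in> extensional (carrier H)"
    by (simp add: central_lift_def)
  fix x assume x: "x \<in> carrier H"
  have "g x = g (center_part x \<otimes> \<sigma> (h x))"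
    using x by (simp add: center_part_decomp)
  also have "\<dots> = \<Phi> (center_part x) \<otimes> g (\<sigma> (h x))"
    using x g(1) center_part_grp_center grp_center_closed h_closed section_closed
    by (simp add: hom_mult gZ)
  finally show "g x = central_lift \<Phi> (\<lambda>a. g (\<sigma> a)) x"
    using x by (simp add: central_lift_def)
qed

lemma hom_section_cocycle:
  assumes g: "g \<in> hom H H" and gZ: "\<And>z. z \<in> grp_center H \<Longrightarrow> g z = \<Phi> z"
    and ab: "a \<in> carrier K" "b \<in> carrier K"
  shows "g (\<sigma> a) \<otimes> g (\<sigma> b) = \<Phi> (section_cocycle a b) \<otimes> g (\<sigma> (a \<otimes>\<^bsub>K\<^esub> b))"
proof -
  have c: "section_cocycle a b \<in> grp_center H"
    using ab by (rule section_cocycle_grp_center)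
  have "g (\<sigma> a) \<otimes> g (\<sigma> b) = g (section_cocycle a b \<otimes> \<sigma> (a \<otimes>\<^bsub>K\<^esub> b))"
    using g ab by (simp add: hom_mult section_closed section_cocycle_decomp)
  also have "\<dots> = \<Phi> (section_cocycle a b) \<otimes> g (\<sigma> (a \<otimes>\<^bsub>K\<^esub> b))"
    using g ab c grp_center_closed section_closed by (simp add: hom_mult gZ)
  finally show ?thesis .
qed

context
  fixes \<pi> :: "'k \<Rightarrow> 'k"
  assumes \<pi>_hom: "\<pi> \<in> hom K K"
begin

lemma twisted_cocycle_iff:
  assumes f: "f a \<in> grp_center H" "f b \<in> grp_center H" "f (a \<otimes>\<^bsub>K\<^esub> b) \<in> grp_center H"
    and ab: "a \<in> carrier K" "b \<in> carrier K"
  shows "(f a \<otimes> \<sigma> (\<pi> a)) \<otimes> (f b \<otimes> \<sigma> (\<pi> b)) =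
      \<Phi> (section_cocycle a b) \<otimes> (f (a \<otimes>\<^bsub>K\<^esub> b) \<otimes> \<sigma> (\<pi> (a \<otimes>\<^bsub>K\<^esub> b)))
    \<longleftrightarrow> f a \<otimes> f b =
      \<Phi> (section_cocycle a b) \<otimes> inv (section_cocycle (\<pi> a) (\<pi> b)) \<otimes> f (a \<otimes>\<^bsub>K\<^esub> b)"
  using twisted_section_mult_iff[OF f(1,2) _ f(3), of "\<Phi> (section_cocycle a b)" "\<pi> a" "\<pi> b"]
    ab \<pi>_hom \<Phi>_grp_center section_cocycle_grp_center
  by (simp add: hom_mult hom_in_carrier)

lemma central_lift_mem_covering_endos:
  assumes f: "f \<in> twisting_functions \<Phi> \<pi>"
  shows "central_lift \<Phi> (\<lambda>a. f a \<otimes> \<sigma> (\<pi> a)) \<in> covering_endos \<Phi> \<pi>"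
proof -
  let ?\<phi> = "\<lambda>a. f a \<otimes> \<sigma> (\<pi> a)"
  have fZ: "\<And>a. a \<in> carrier K \<Longrightarrow> f a \<in> grp_center H"
    using f by (auto simp: twisting_functions_def)
  have \<pi>K: "\<And>a. a \<in> carrier K \<Longrightarrow> \<pi> a \<in> carrier K"
    using \<pi>_hom by (rule hom_in_carrier)
  have \<phi>: "?\<phi> a \<in> carrier H" if "a \<in> carrier K" for a
    using that fZ \<pi>K grp_center_closed section_closed by simp
  have cocycle: "?\<phi> a \<otimes> ?\<phi> b = \<Phi> (section_cocycle a b) \<otimes> ?\<phi> (a \<otimes>\<^bsub>K\<^esub> b)"
    if "a \<in> carrier K" "b \<in> carrier K" for a b
    using f that fZ twisted_cocycle_iff by (simp add: twisting_functions_def)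
  have coset: "central_lift \<Phi> ?\<phi> x \<in> \<sigma> (\<pi> (h x)) <# grp_center H" if x: "x \<in> carrier H" for x
  proof -
    let ?w = "\<Phi> (center_part x) \<otimes> f (h x)"
    have w: "?w \<in> grp_center H"
      using x fZ h_closed center_part_grp_center \<Phi>_grp_center
      by (simp add: subgroup.m_closed[OF grp_center_subgroup])
    have p: "\<sigma> (\<pi> (h x)) \<in> carrier H"
      using x h_closed \<pi>K section_closed by simp
    have "central_lift \<Phi> ?\<phi> x = ?w \<otimes> \<sigma> (\<pi> (h x))"
      using x w p fZ h_closed center_part_grp_center \<Phi>_grp_center grp_center_closed
      by (simp add: central_lift_def m_assoc)
    then show ?thesis
      using w p grp_center_closed by (simp add: mem_l_coset_grp_center_iff m_assoc)
  qed
  show ?thesis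
    unfolding covering_endos_def
    using central_lift_hom[OF \<phi> cocycle] central_lift_grp_center[OF \<phi> cocycle] coset
    by (simp add: central_lift_def)
qed

lemma covering_endo_eq_central_lift:
  assumes g: "g \<in> covering_endos \<Phi> \<pi>"
  shows "\<exists>f \<in> twisting_functions \<Phi> \<pi>. g = central_lift \<Phi> (\<lambda>a. f a \<otimes> \<sigma> (\<pi> a))"
proof -
  have g_hom: "g \<in> hom H H" and g_ext: "g \<in> extensional (carrier H)"
    and gZ: "\<And>z. z \<in> grp_center H \<Longrightarrow> g z = \<Phi> z"
    and g_coset: "\<And>x. x \<in> carrier H \<Longrightarrow> g x \<in> \<sigma> (\<pi> (h x)) <# grp_center H"
    using g by (auto simp: covering_endos_def)
  define f where "f = (\<lambda>a \<in> carrier K. g (\<sigma> a) \<otimes> inv \<sigma> (\<pi> a))"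
  have p: "\<sigma> (\<pi> a) \<in> carrier H" and g\<sigma>_closed: "g (\<sigma> a) \<in> carrier H" if "a \<in> carrier K" for a
    using that by (simp_all add: section_closed hom_in_carrier[OF \<pi>_hom] hom_in_carrier[OF g_hom])
  have fZ: "f a \<in> grp_center H" if a: "a \<in> carrier K" for a
  proof -
    have "g (\<sigma> a) \<in> \<sigma> (\<pi> a) <# grp_center H"
      using g_coset[OF section_closed[OF a]] a by (simp add: h_section)
    then show ?thesis
      using a p by (simp add: f_def mem_l_coset_grp_center_iff)
  qed
  have g\<sigma>: "g (\<sigma> a) = f a \<otimes> \<sigma> (\<pi> a)" if "a \<in> carrier K" for a
    using that p g\<sigma>_closed by (simp add: f_def m_assoc)
  have f: "f \<in> twisting_functions \<Phi> \<pi>"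
    unfolding twisting_functions_def
  proof (intro CollectI conjI ballI)
    show "f \<in> carrier K \<rightarrow>\<^sub>E grp_center H"
      using fZ by (simp add: f_def)
    fix a b assume ab: "a \<in> carrier K" "b \<in> carrier K"
    have "(f a \<otimes> \<sigma> (\<pi> a)) \<otimes> (f b \<otimes> \<sigma> (\<pi> b)) =
        \<Phi> (section_cocycle a b) \<otimes> (f (a \<otimes>\<^bsub>K\<^esub> b) \<otimes> \<sigma> (\<pi> (a \<otimes>\<^bsub>K\<^esub> b)))"
      using hom_section_cocycle[OF g_hom gZ ab] ab by (simp add: g\<sigma>)
    then show "f a \<otimes> f b =
        \<Phi> (section_cocycle a b) \<otimes> inv (section_cocycle (\<pi> a) (\<pi> b)) \<otimes> f (a \<otimes>\<^bsub>K\<^esub> b)"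
      using twisted_cocycle_iff[OF fZ[OF ab(1)] fZ[OF ab(2)] fZ[OF K.m_closed[OF ab]] ab] by simp
  qed
  have "g = central_lift \<Phi> (\<lambda>a. g (\<sigma> a))"
    using g_hom g_ext gZ by (rule hom_eq_central_lift)
  also have "\<dots> = central_lift \<Phi> (\<lambda>a. f a \<otimes> \<sigma> (\<pi> a))"
    using g\<sigma> by (rule central_lift_cong)
  finally show ?thesis
    using f by blast
qed

theorem covering_endos_eq_image_twisting_functions:
  "covering_endos \<Phi> \<pi> = (\<lambda>f. central_lift \<Phi> (\<lambda>a. f a \<otimes> \<sigma> (\<pi> a))) ` twisting_functions \<Phi> \<pi>"
  using central_lift_mem_covering_endos covering_endo_eq_central_lift by blast

end

end

lemma g_fun_eq_central_lift:
  assumes lin_comb: "lin_comb H ss bs F \<in> hom (H\<lparr>carrier := grp_center H\<rparr>) (H\<lparr>carrier := grp_center H\<rparr>)"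
    and f: "f \<in> carrier K \<rightarrow> grp_center H" and \<pi>: "\<pi> \<in> carrier K \<rightarrow> carrier K"
  shows "g_fun H h \<sigma> F ss bs \<pi> f = central_lift (lin_comb H ss bs F) (\<lambda>a. f a \<otimes> \<sigma> (\<pi> a))"
  unfolding g_fun_def central_lift_def
proof (rule restrict_ext)
  fix x assume x: "x \<in> carrier H"
  have hx: "h x \<in> carrier K"
    using x by (rule h_closed)
  have "lin_comb H ss bs F (center_part x) \<in> carrier H" "f (h x) \<in> carrier H" "\<sigma> (\<pi> (h x)) \<in> carrier H"
    using x hx funcset_mem[OF f hx] funcset_mem[OF \<pi> hx] hom_in_carrier[OF lin_comb]
      center_part_grp_center section_closed grp_center_closed
    by auto
  then show "lin_comb H ss bs F (THE t. t \<in> grp_center H \<and> x = t \<otimes> \<sigma> (h x)) \<otimes> f (h x) \<otimes> \<sigma> (\<pi> (h x)) =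
      lin_comb H ss bs F (center_part x) \<otimes> (f (h x) \<otimes> \<sigma> (\<pi> (h x)))"
    using x by (simp add: the_center_part m_assoc)
qed

end

lemma central_quotient_section_of_M_member_2:
  assumes c: "C2_aut L N (Hm\<lparr>carrier := C\<rparr>) hc hs Fc"
    and m: "M_member_2 L N Hm C hc hm hs Fc Fm"
  shows "central_quotient_section Hm (L\<lparr>carrier := N\<rparr>) hm hs C"
proof -
  have C: "subgroup C Hm" "grp_center (Hm\<lparr>carrier := C\<rparr>) = grp_center Hm \<inter> C"
    and "C2_aut L N Hm hm hs Fm"
    using m unfolding M_member_2_def by auto
  then have H: "group Hm" and "group L" "N \<lhd> L"
    and hm: "hm \<in> epi Hm (L\<lparr>carrier := N\<rparr>)" "kernel Hm (L\<lparr>carrier := N\<rparr>) hm = grp_center Hm"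
    and hs: "\<forall>a \<in> N. hm (hs a) = a"
    unfolding C2_aut_def by auto
  then have K: "group (L\<lparr>carrier := N\<rparr>)"
    by (simp add: group.subgroup_imp_group normal_imp_subgroup)
  have hs_C: "\<forall>a \<in> N. hs a \<in> C"
    using c unfolding C2_aut_def by simp
  show ?thesis
    using hm C hs hs_C
    by (intro central_quotient_section.intro[OF H K] central_quotient_section_axioms.intro)
      (simp_all add: epi_def)
qed

theorem proposition3p5:
  fixes L :: "('l, 'a) monoid_scheme" and N :: "'l set"
    and Hm :: "('h, 'b) monoid_scheme" and C :: "'h set"
    and hc hm :: "'h \<Rightarrow> 'l" and hs :: "'l \<Rightarrow> 'h"
    and Fc Fm :: "'l \<Rightarrow> 'h \<Rightarrow> 'h"
    and n :: nat and ss :: "int list" and bs :: "'l list" and \<pi> :: "'l \<Rightarrow> 'l"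
  assumes c: "C2_aut L N (Hm\<lparr>carrier := C\<rparr>) hc hs Fc"
    and m: "M_member_2 L N Hm C hc hm hs Fc Fm"
    and n: "n > 0" and ss: "length ss = n" and bs: "length bs = n" "set bs \<subseteq> carrier L"
    and \<pi>: "\<pi> \<in> hom (L\<lparr>carrier := N\<rparr>) (L\<lparr>carrier := N\<rparr>)"
  shows "A_set L Hm hm hs Fm ss bs \<pi> =
           g_fun Hm hm hs Fm ss bs \<pi> ` F_set L N Hm C hs Fm ss bs \<pi>"
proof -
  interpret central_quotient_section Hm "L\<lparr>carrier := N\<rparr>" hm hs C
    using c m by (rule central_quotient_section_of_M_member_2)
  have Fm_iso: "\<forall>l \<in> carrier L. Fm l \<in> iso Hm Hm"
    using m unfolding M_member_2_def C2_aut_def by auto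
  define \<Phi> where "\<Phi> = lin_comb Hm ss bs Fm"
  have \<Phi>: "\<Phi> \<in> hom (Hm\<lparr>carrier := grp_center Hm\<rparr>) (Hm\<lparr>carrier := grp_center Hm\<rparr>)"
    unfolding \<Phi>_def using Fm_iso bs(2) by (intro lin_comb_hom_grp_center) auto
  have "A_set L Hm hm hs Fm ss bs \<pi> = covering_endos \<Phi> \<pi>"
    by (simp add: A_set_def covering_endos_def \<Phi>_def)
  moreover have "F_set L N Hm C hs Fm ss bs \<pi> = twisting_functions \<Phi> \<pi>"
    unfolding F_set_def twisting_functions_def \<Phi>_def
    using the_section_cocycle hom_mult[OF \<pi>] hom_in_carrier[OF \<pi>] by simp
  moreover have "g_fun Hm hm hs Fm ss bs \<pi> f = central_lift \<Phi> (\<lambda>a. f a \<otimes>\<^bsub>Hm\<^esub> hs (\<pi> a))"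
    if "f \<in> twisting_functions \<Phi> \<pi>" for f
    using that \<Phi> hom_in_carrier[OF \<pi>] unfolding \<Phi>_def
    by (intro g_fun_eq_central_lift) (auto simp: twisting_functions_def)
  ultimately show ?thesis
    using covering_endos_eq_image_twisting_functions[OF \<Phi> \<pi>] by (simp cong: image_cong)
qed

end
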